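(* Let $m\in\mathbb{N}$, $0<\sigma_1<\sigma_2<\dots<\sigma_m$, and $b_1,\dots,b_m>0$ with $\sum_{i=1}^m b_i<1$. Let $M$ be the symmetric $m\times m$ matrix with $M_{ii}=(1-b_i)/\sigma_i$ and $M_{ij}=-\sqrt{b_ib_j/(\sigma_i\sigma_j)}$ for $i\neq j$, and let $\mu_1<\dots<\mu_m$ be the roots of $$1+\sum_{j=1}^m\frac{\sigma_jb_j}{(1-\sum_{i=1}^mb_i)(\sigma_j-\lambda)}=0.$$ Then the eigenvalues of $M$ are exactly $1/\mu_1>1/\mu_2>\dots>1/\mu_m$ (all simple); equivalently, the squared semi-axes $h_1^2\le\dots\le h_m^2$ of the ellipsoid $\{p\in\mathbb{R}^m: p^{T}Mp=1\}$ satisfy $h_k^2=\mu_k$ for $k=1,\dots,m$.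
   Context: Under the stated hypotheses the displayed equation in $\lambda$ has exactly $m$ roots, all real, satisfying $\sigma_j<\mu_j<\sigma_{j+1}$ ($j<m$) and $\sigma_m<\mu_m$. *)

theory Defs
  imports Jordan_Normal_Form.Char_Poly
begin

text \<open>Indices are shifted to 0..m-1. The symmetric m x m matrix M of the paper.\<close>
definition Mmat :: "nat \<Rightarrow> (nat \<Rightarrow> real) \<Rightarrow> (nat \<Rightarrow> real) \<Rightarrow> real mat" where
  "Mmat m \<sigma> b = mat m m (\<lambda>(i,j). if i = j then (1 - b i) / \<sigma> i
                                   else - sqrt (b i * b j / (\<sigma> i * \<sigma> j)))"

definition secular_root :: "nat \<Rightarrow> (nat \<Rightarrow> real) \<Rightarrow> (nat \<Rightarrow> real) \<Rightarrow> real \<Rightarrow> bool" where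
  "secular_root m \<sigma> b x \<longleftrightarrow> (\<forall>j<m. x \<noteq> \<sigma> j) \<and>
     1 + (\<Sum>j<m. \<sigma> j * b j / ((1 - (\<Sum>i<m. b i)) * (\<sigma> j - x))) = 0"

end

theory Submission
  imports Defs
begin

text \<open>Writing \<open>a\<^sub>i = \<surd>(b\<^sub>i/\<sigma>\<^sub>i)\<close>, the matrix \<open>M\<close> is \<open>diag(1/\<sigma>) - a a\<^sup>T\<close>. For a diagonal
  matrix minus a rank-one matrix, every \<open>\<lambda>\<close> off the diagonal with
  \<open>\<Sum>\<^sub>j a\<^sub>j\<^sup>2/(d\<^sub>j - \<lambda>) = 1\<close> is an eigenvalue, with eigenvector \<open>(a\<^sub>j/(d\<^sub>j - \<lambda>))\<^sub>j\<close>; for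
  \<open>\<lambda> = 1/\<mu>\<close> this condition is exactly the secular equation at \<open>\<mu>\<close>. Hence the \<open>m\<close> distinct
  numbers \<open>1/\<mu>\<^sub>k\<close> are eigenvalues of the \<open>m \<times> m\<close> matrix \<open>M\<close>, so they are all of them and
  the characteristic polynomial is \<open>\<Prod>\<^sub>k (X - 1/\<mu>\<^sub>k)\<close>, with simple roots.\<close>

definition diag_minus_rank_one :: "nat \<Rightarrow> (nat \<Rightarrow> 'a::field) \<Rightarrow> (nat \<Rightarrow> 'a) \<Rightarrow> 'a mat" where
  "diag_minus_rank_one n d a = mat n n (\<lambda>(i,j). (if i = j then d i else 0) - a i * a j)"

lemma diag_minus_rank_one_eigenvalue:
  fixes d a :: "nat \<Rightarrow> 'a::field"
  assumes secular: "(\<Sum>j<n. a j ^ 2 / (d j - e)) = 1"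
    and off_diag: "\<And>j. j < n \<Longrightarrow> e \<noteq> d j"
  shows "eigenvalue (diag_minus_rank_one n d a) e"
proof -
  define M where "M = diag_minus_rank_one n d a"
  define u where "u = vec n (\<lambda>j. a j / (d j - e))"
  have M: "M \<in> carrier_mat n n" and u: "u \<in> carrier_vec n"
    unfolding M_def u_def diag_minus_rank_one_def by auto
  have "\<exists>k<n. a k \<noteq> 0"
  proof (rule ccontr)
    assume "\<not> (\<exists>k<n. a k \<noteq> 0)"
    hence "(\<Sum>j<n. a j ^ 2 / (d j - e)) = 0" by (intro sum.neutral) auto
    with secular show False by simp
  qed
  then obtain k where k: "k < n" "a k \<noteq> 0" by blast
  have "u \<noteq> 0\<^sub>v n"
  proof
    assume "u = 0\<^sub>v n"
    hence "u $ k = 0" using k by simp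
    thus False using k off_diag[OF k(1)] unfolding u_def by simp
  qed
  moreover have "M *\<^sub>v u = e \<cdot>\<^sub>v u"
  proof (rule eq_vecI)
    fix i assume "i < dim_vec (e \<cdot>\<^sub>v u)"
    hence i: "i < n" using u by simp
    have "(M *\<^sub>v u) $ i = (\<Sum>j<n. M $$ (i,j) * u $ j)"
      using M u i by (simp add: scalar_prod_def row_def lessThan_atLeast0)
    also have "\<dots> = (\<Sum>j<n. (if i = j then d i * u $ i else 0) - a i * (a j ^ 2 / (d j - e)))"
      unfolding M_def u_def diag_minus_rank_one_def
      by (intro sum.cong) (use i in \<open>auto simp: power2_eq_square algebra_simps\<close>)
    also have "\<dots> = d i * u $ i - a i * (\<Sum>j<n. a j ^ 2 / (d j - e))"
      using i by (simp add: sum_subtractf sum_distrib_left)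
    also have "\<dots> = d i * u $ i - a i"
      using secular by simp
    also have "\<dots> = e * u $ i"
      using i off_diag[OF i] unfolding u_def by (simp add: field_simps)
    finally show "(M *\<^sub>v u) $ i = (e \<cdot>\<^sub>v u) $ i" using i u by simp
  qed (use M u in simp)
  ultimately show ?thesis
    using M u unfolding M_def eigenvalue_def eigenvector_def by auto
qed

lemma Mmat_eq_diag_minus_rank_one:
  assumes "\<And>i. i < m \<Longrightarrow> 0 < \<sigma> i" and "\<And>i. i < m \<Longrightarrow> 0 \<le> b i"
  shows "Mmat m \<sigma> b = diag_minus_rank_one m (\<lambda>i. 1 / \<sigma> i) (\<lambda>i. sqrt (b i / \<sigma> i))"
    (is "_ = ?D")
proof (rule eq_matI)
  fix i j assume "i < dim_row ?D" "j < dim_col ?D"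
  hence ij: "i < m" "j < m" unfolding diag_minus_rank_one_def by auto
  show "Mmat m \<sigma> b $$ (i, j) = ?D $$ (i, j)"
  proof (cases "i = j")
    case True
    with ij assms(1,2)[OF ij(1)] show ?thesis
      unfolding Mmat_def diag_minus_rank_one_def by (simp add: diff_divide_distrib)
  next
    case False
    with ij show ?thesis
      unfolding Mmat_def diag_minus_rank_one_def by (simp add: real_sqrt_mult[symmetric])
  qed
qed (auto simp: Mmat_def diag_minus_rank_one_def)

lemma secular_root_pos:
  assumes "\<And>j. j < m \<Longrightarrow> 0 < \<sigma> j" and "\<And>i. i < m \<Longrightarrow> 0 < b i"
    and "(\<Sum>i<m. b i) < 1" and "secular_root m \<sigma> b x"
  shows "0 < x"
proof (rule ccontr)
  assume "\<not> 0 < x"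
  hence "\<And>j. j < m \<Longrightarrow> 0 < \<sigma> j - x" using assms(1) by force
  with assms(1-3) have "0 \<le> (\<Sum>j<m. \<sigma> j * b j / ((1 - (\<Sum>i<m. b i)) * (\<sigma> j - x)))"
    by (intro sum_nonneg divide_nonneg_pos mult_pos_pos) (auto simp: less_imp_le)
  with assms(4) show False unfolding secular_root_def by linarith
qed

text \<open>Both the hypothesis and the conclusion amount to \<open>x \<Sum>\<^sub>j b\<^sub>j/(\<sigma>\<^sub>j - x) = -1\<close>, via
  \<open>\<sigma>\<^sub>j b\<^sub>j/(\<sigma>\<^sub>j - x) = b\<^sub>j + x b\<^sub>j/(\<sigma>\<^sub>j - x)\<close>.\<close>
lemma secular_root_reciprocal:
  assumes "\<And>j. j < m \<Longrightarrow> 0 < \<sigma> j" and "(\<Sum>i<m. b i) < 1"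
    and root: "secular_root m \<sigma> b x" and "x \<noteq> 0"
  shows "(\<Sum>j<m. (b j / \<sigma> j) / (1 / \<sigma> j - 1 / x)) = 1"
proof -
  let ?c = "1 - (\<Sum>i<m. b i)" and ?T = "\<Sum>j<m. b j / (\<sigma> j - x)"
  have off: "\<And>j. j < m \<Longrightarrow> \<sigma> j - x \<noteq> 0" using root unfolding secular_root_def by auto
  have "(\<Sum>j<m. \<sigma> j * b j / (?c * (\<sigma> j - x))) = (\<Sum>j<m. \<sigma> j * b j / (\<sigma> j - x)) / ?c"
    by (simp add: sum_divide_distrib mult.commute)
  hence "(\<Sum>j<m. \<sigma> j * b j / (\<sigma> j - x)) / ?c = -1"
    using root unfolding secular_root_def by linarith
  hence "-?c = (\<Sum>j<m. b j + x * (b j / (\<sigma> j - x)))"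
    using assms(2) off by (auto simp: field_simps intro!: sum.cong)
  hence "x * ?T = -1" by (simp add: sum.distrib sum_distrib_left)
  moreover have "(\<Sum>j<m. (b j / \<sigma> j) / (1 / \<sigma> j - 1 / x)) = (\<Sum>j<m. - (x * (b j / (\<sigma> j - x))))"
  proof (rule sum.cong)
    fix j assume "j \<in> {..<m}"
    hence "\<sigma> j \<noteq> 0" "\<sigma> j - x \<noteq> 0" using assms(1) off by force+
    with assms(4) show "(b j / \<sigma> j) / (1 / \<sigma> j - 1 / x) = - (x * (b j / (\<sigma> j - x)))"
      by (simp add: field_simps)
  qed simp
  hence "(\<Sum>j<m. (b j / \<sigma> j) / (1 / \<sigma> j - 1 / x)) = - (x * ?T)"
    by (simp add: sum_negf sum_distrib_left)
  ultimately show ?thesis by simp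
qed

lemma eigenvalue_Mmat_secular_root:
  assumes \<sigma>_pos: "\<And>j. j < m \<Longrightarrow> 0 < \<sigma> j" and b_pos: "\<And>i. i < m \<Longrightarrow> 0 < b i"
    and "(\<Sum>i<m. b i) < 1" and root: "secular_root m \<sigma> b x"
  shows "eigenvalue (Mmat m \<sigma> b) (1 / x)"
proof -
  have b_nonneg: "\<And>i. i < m \<Longrightarrow> 0 \<le> b i" using b_pos by (simp add: less_imp_le)
  have off_diag: "x \<noteq> \<sigma> j" if "j < m" for j
    using root that by (auto simp: secular_root_def)
  have "(\<Sum>j<m. sqrt (b j / \<sigma> j) ^ 2 / (1 / \<sigma> j - 1 / x))
      = (\<Sum>j<m. (b j / \<sigma> j) / (1 / \<sigma> j - 1 / x))"
    by (intro sum.cong) (auto simp: \<sigma>_pos b_nonneg less_imp_le)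
  also have "\<dots> = 1"
    using secular_root_reciprocal[of m \<sigma> b, OF \<sigma>_pos assms(3) root]
      secular_root_pos[of m \<sigma> b, OF \<sigma>_pos b_pos assms(3) root] by simp
  finally have "eigenvalue (diag_minus_rank_one m (\<lambda>i. 1 / \<sigma> i) (\<lambda>i. sqrt (b i / \<sigma> i))) (1 / x)"
    by (rule diag_minus_rank_one_eigenvalue) (simp add: off_diag)
  thus ?thesis using Mmat_eq_diag_minus_rank_one[of m \<sigma> b, OF \<sigma>_pos b_nonneg] by simp
qed

lemma poly_eq_prod_of_distinct_roots:
  fixes p :: "'a::field poly" and r :: "nat \<Rightarrow> 'a"
  assumes "degree p = n" and "coeff p n = 1" and inj: "inj_on r {..<n}"
    and roots: "\<And>k. k < n \<Longrightarrow> poly p (r k) = 0"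
  shows "p = (\<Prod>k<n. [:- r k, 1:])"
proof (rule poly_eqI_degree_lead_coeff[where n = n and A = "r ` {..<n}"])
  let ?q = "\<Prod>k<n. [:- r k, 1:]"
  have deg: "degree ?q = n"
    by (subst degree_prod_sum_eq) auto
  moreover have "lead_coeff ?q = 1" by (simp add: lead_coeff_prod)
  ultimately show "coeff p n = coeff ?q n" using assms(2) by simp
  show "card (r ` {..<n}) \<ge> n" using card_image[OF inj] by simp
  show "degree p \<le> n" "degree ?q \<le> n" using assms(1) deg by auto
qed (use roots in \<open>auto simp: poly_prod prod_zero_iff\<close>)

lemma order_prod_distinct_linear_factors:
  fixes r :: "nat \<Rightarrow> 'a::idom"
  assumes inj: "inj_on r {..<n}" and k: "k < n"
  shows "order (r k) (\<Prod>j<n. [:- r j, 1:]) = 1"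
proof -
  let ?q = "\<Prod>j\<in>{..<n}-{k}. [:- r j, 1:]"
  have split: "(\<Prod>j<n. [:- r j, 1:]) = [:- r k, 1:] * ?q"
    using k by (subst prod.remove[of _ k]) auto
  have "poly ?q (r k) \<noteq> 0"
    using inj k by (auto simp: poly_prod prod_zero_iff inj_on_def)
  hence "?q \<noteq> 0" and "order (r k) ?q = 0" by (auto intro: order_0I)
  moreover have "order (r k) [:- r k, 1:] = 1" using order_power_n_n[of "r k" 1] by simp
  moreover have "[:- r k, 1:] * ?q \<noteq> 0" using \<open>?q \<noteq> 0\<close> by (metis mult_eq_0_iff pCons_eq_0_iff one_neq_zero)
  ultimately show ?thesis unfolding split by (subst order_mult) auto
qed

lemma char_poly_eq_prod_of_distinct_eigenvalues:
  fixes A :: "'a::field mat"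
  assumes A: "A \<in> carrier_mat n n" and "inj_on r {..<n}"
    and "\<And>k. k < n \<Longrightarrow> eigenvalue A (r k)"
  shows "char_poly A = (\<Prod>k<n. [:- r k, 1:])"
proof (rule poly_eq_prod_of_distinct_roots)
  show "degree (char_poly A) = n" "coeff (char_poly A) n = 1"
    using degree_monic_char_poly[OF A] by auto
  show "poly (char_poly A) (r k) = 0" if "k < n" for k
    using assms(3)[OF that] eigenvalue_root_char_poly[OF A] by simp
qed (rule assms(2))

lemma distinct_eigenvalues_simple:
  fixes A :: "'a::field mat"
  assumes A: "A \<in> carrier_mat n n" and inj: "inj_on r {..<n}"
    and "\<And>k. k < n \<Longrightarrow> eigenvalue A (r k)"
  shows "{x. eigenvalue A x} = r ` {..<n}" and "\<And>k. k < n \<Longrightarrow> order (r k) (char_poly A) = 1"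
proof -
  have cp: "char_poly A = (\<Prod>k<n. [:- r k, 1:])"
    using assms by (rule char_poly_eq_prod_of_distinct_eigenvalues)
  show "{x. eigenvalue A x} = r ` {..<n}"
    unfolding eigenvalue_root_char_poly[OF A] cp by (auto simp: poly_prod prod_zero_iff)
  show "order (r k) (char_poly A) = 1" if "k < n" for k
    unfolding cp using order_prod_distinct_linear_factors[OF inj that] .
qed

theorem lemma2p9:
  fixes m :: nat and \<sigma> b \<mu> :: "nat \<Rightarrow> real"
  assumes "0 < m \<Longrightarrow> 0 < \<sigma> 0"
    and "\<And>i j. i < j \<Longrightarrow> j < m \<Longrightarrow> \<sigma> i < \<sigma> j"
    and "\<And>i. i < m \<Longrightarrow> 0 < b i"
    and "(\<Sum>i<m. b i) < 1"
    and "\<And>i j. i < j \<Longrightarrow> j < m \<Longrightarrow> \<mu> i < \<mu> j"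
    and "{x. secular_root m \<sigma> b x} = \<mu> ` {..<m}"
  shows "{k. eigenvalue (Mmat m \<sigma> b) k} = (\<lambda>k. 1 / \<mu> k) ` {..<m}
         \<and> (\<forall>i j. i < j \<and> j < m \<longrightarrow> 1 / \<mu> i > 1 / \<mu> j)
         \<and> (\<forall>k<m. order (1 / \<mu> k) (char_poly (Mmat m \<sigma> b)) = 1)"
proof -
  have \<sigma>_pos: "\<And>j. j < m \<Longrightarrow> 0 < \<sigma> j"
    using assms(1,2) by (metis gr_zeroI less_trans)
  have root: "\<And>k. k < m \<Longrightarrow> secular_root m \<sigma> b (\<mu> k)" using assms(6) by blast
  have decreasing: "1 / \<mu> j < 1 / \<mu> i" if "i < j" "j < m" for i j
    using assms(5)[OF that] secular_root_pos[of m \<sigma> b, OF \<sigma>_pos assms(3,4) root] that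
    by (simp add: divide_strict_left_mono)
  have inj: "inj_on (\<lambda>k. 1 / \<mu> k) {..<m}"
  proof (rule inj_onI)
    fix i j assume "i \<in> {..<m}" "j \<in> {..<m}" "1 / \<mu> i = 1 / \<mu> j"
    thus "i = j" using decreasing[of i j] decreasing[of j i] by (cases i j rule: linorder_cases) auto
  qed
  have "Mmat m \<sigma> b \<in> carrier_mat m m" unfolding Mmat_def by simp
  from distinct_eigenvalues_simple[OF this inj] decreasing show ?thesis
    using eigenvalue_Mmat_secular_root[of m \<sigma> b, OF \<sigma>_pos assms(3,4) root] by auto
qed

end
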